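(* Let $A$ and $B$ be disjoint cubic graphs with $v(A)\equiv 2\pmod 6$ and $v(B)\equiv 2\pmod 6$, let $a=a_1a_2\in E(A)$ and $b=b_1b_2\in E(B)$, and let $G=Aa|bB$ with middle edge $z=z_1z_2$. Then $v(G)\equiv 0\pmod 6$ and $G$ has no $\Lambda$-factor containing the edge $z$.
   Context: Graphs are finite, undirected, without loops or multiple edges; $v(G)=|V(G)|$. For disjoint graphs $A,B$ with $a=a_1a_2\in E(A)$, $b=b_1b_2\in E(B)$, $AabB$ is obtained from $(A-a)\cup(B-b)$ (edge deletions) by adding the edges $a_1b_1,a_2b_2$; $Aa|bB$ is obtained from $AabB$ by replacing each edge $a_ib_i$ ($i=1,2$) by a path $a_iz_ib_i$ through a new vertex $z_i$ and adding the new edge $z=z_1z_2$, the middle edge. A $\Lambda$-factor of a graph is a spanning subgraph each of whose components is a path on 3 vertices. *)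

theory Defs
  imports Main
begin

type_synonym 'a graph = "'a set \<times> 'a set set"

definition verts :: "'a graph \<Rightarrow> 'a set" where "verts G = fst G"
definition edges :: "'a graph \<Rightarrow> 'a set set" where "edges G = snd G"

definition is_graph :: "'a graph \<Rightarrow> bool" where
  "is_graph G \<longleftrightarrow> finite (verts G) \<and>
     (\<forall>e\<in>edges G. \<exists>u w. u \<noteq> w \<and> u \<in> verts G \<and> w \<in> verts G \<and> e = {u, w})"

definition degree :: "'a graph \<Rightarrow> 'a \<Rightarrow> nat" where
  "degree G v = card {e \<in> edges G. v \<in> e}"

definition cubic :: "'a graph \<Rightarrow> bool" where
  "cubic G \<longleftrightarrow> is_graph G \<and> (\<forall>v\<in>verts G. degree G v = 3)"

text \<open>The graph A a|b B with middle edge z1 z2, where z1, z2 are the new vertices.\<close>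
definition bridge_join ::
  "'a graph \<Rightarrow> 'a \<Rightarrow> 'a \<Rightarrow> 'a graph \<Rightarrow> 'a \<Rightarrow> 'a \<Rightarrow> 'a \<Rightarrow> 'a \<Rightarrow> 'a graph" where
  "bridge_join A a1 a2 B b1 b2 z1 z2 =
     (verts A \<union> verts B \<union> {z1, z2},
      (edges A - {{a1, a2}}) \<union> (edges B - {{b1, b2}}) \<union>
      {{a1, z1}, {z1, b1}, {a2, z2}, {z2, b2}, {z1, z2}})"

definition component :: "'a set set \<Rightarrow> 'a \<Rightarrow> 'a set" where
  "component F v = {u. (\<lambda>x y. {x, y} \<in> F)\<^sup>*\<^sup>* v u}"

text \<open>F is (the edge set of) a Lambda-factor of G: a spanning subgraph (verts G, F)
  each of whose components is a path on 3 vertices.\<close>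
definition Lambda_factor :: "'a graph \<Rightarrow> 'a set set \<Rightarrow> bool" where
  "Lambda_factor G F \<longleftrightarrow> F \<subseteq> edges G \<and>
     (\<forall>v\<in>verts G. \<exists>x y w. x \<noteq> y \<and> y \<noteq> w \<and> x \<noteq> w \<and>
        component F v = {x, y, w} \<and>
        {e \<in> F. e \<subseteq> {x, y, w}} = {{x, y}, {y, w}})"

end

theory Submission
  imports Defs
begin

text \<open>The component of the middle edge in a \<open>\<Lambda>\<close>-factor is \<open>{z\<^sub>1, z\<^sub>2, t}\<close> for a single
  further vertex \<open>t\<close>, so it misses the vertices of \<open>A\<close> or those of \<open>B\<close>, say those of \<open>A\<close>.
  Every edge of \<open>Aa|bB\<close> leaving \<open>V(A)\<close> ends in \<open>z\<^sub>1\<close> or \<open>z\<^sub>2\<close>, so every other component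
  meeting \<open>V(A)\<close> lies inside \<open>V(A)\<close>. Hence \<open>V(A)\<close> is partitioned into triples and
  \<open>3\<close> divides \<open>v(A) \<equiv> 2 (mod 6)\<close>, a contradiction.\<close>

lemma component_refl: "v \<in> component F v"
  by (simp add: component_def)

lemma edge_in_component: "{u, w} \<in> F \<Longrightarrow> w \<in> component F u"
  by (simp add: component_def r_into_rtranclp)

lemma component_sym:
  assumes "u \<in> component F v"
  shows "v \<in> component F u"
proof -
  have "(\<lambda>x y. {x, y} \<in> F)\<^sup>*\<^sup>* v u"
    using assms by (simp add: component_def)
  then have "(\<lambda>x y. {x, y} \<in> F)\<^sup>*\<^sup>* u v"
    by (induction rule: rtranclp_induct)
       (simp, metis (no_types, lifting) converse_rtranclp_into_rtranclp insert_commute)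
  then show ?thesis
    by (simp add: component_def)
qed

lemma component_trans: "u \<in> component F v \<Longrightarrow> w \<in> component F u \<Longrightarrow> w \<in> component F v"
  unfolding component_def by auto

lemma component_eq: "u \<in> component F v \<Longrightarrow> component F u = component F v"
  by (meson component_sym component_trans subsetI subset_antisym)

lemma component_subset:
  assumes leave: "\<And>x y. {x, y} \<in> F \<Longrightarrow> x \<in> X \<Longrightarrow> y \<in> X \<union> Z"
    and Z: "\<And>z. z \<in> Z \<Longrightarrow> component F z \<inter> X = {}"
    and v: "v \<in> X"
  shows "component F v \<subseteq> X"
proof
  fix u assume "u \<in> component F v"
  then have "(\<lambda>x y. {x, y} \<in> F)\<^sup>*\<^sup>* v u"
    by (simp add: component_def)
  then show "u \<in> X"
  proof (induction rule: rtranclp_induct)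
    case base
    then show ?case using v by simp
  next
    case (step y w)
    have "w \<notin> Z"
    proof
      assume "w \<in> Z"
      have "w \<in> component F v"
        using step(1,2) by (simp add: component_def rtranclp.rtrancl_into_rtrancl)
      then have "v \<in> component F w"
        by (rule component_sym)
      with Z[OF \<open>w \<in> Z\<close>] v show False by blast
    qed
    then show ?case
      using leave[OF step(2,3)] by blast
  qed
qed

lemma dvd_card_if_components_card:
  assumes "finite X"
    and sub: "\<And>v. v \<in> X \<Longrightarrow> component F v \<subseteq> X"
    and card: "\<And>v. v \<in> X \<Longrightarrow> card (component F v) = k"
  shows "k dvd card X"
proof -
  let ?C = "component F ` X"
  have union: "\<Union> ?C = X"
    using sub component_refl[of _ F] by auto
  have "card (\<Union> ?C) = k * card ?C"
  proof (rule card_partition[symmetric])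
    show "finite ?C" and "finite (\<Union> ?C)"
      using union assms(1) by simp_all
    show "\<And>c. c \<in> ?C \<Longrightarrow> card c = k"
      using card by auto
    show "c1 \<inter> c2 = {}" if c: "c1 \<in> ?C" "c2 \<in> ?C" "c1 \<noteq> c2" for c1 c2
    proof (rule ccontr)
      assume "c1 \<inter> c2 \<noteq> {}"
      then obtain w where "w \<in> c1" "w \<in> c2" by blast
      moreover obtain v1 v2 where "c1 = component F v1" "c2 = component F v2"
        using c(1,2) by blast
      ultimately have "component F w = c1" "component F w = c2"
        using component_eq by simp_all
      with c(3) show False by simp
    qed
  qed
  then show ?thesis
    unfolding union by (rule dvdI)
qed

lemma Lambda_factor_card_component:
  "Lambda_factor G F \<Longrightarrow> v \<in> verts G \<Longrightarrow> card (component F v) = 3"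
  unfolding Lambda_factor_def by force

lemma Lambda_factor_component_of_edge:
  assumes "Lambda_factor G F" "u \<in> verts G" "{u, w} \<in> F" "u \<noteq> w"
  shows "\<exists>t. component F u = {u, w, t}"
proof -
  have "{u, w} \<subseteq> component F u"
    using component_refl edge_in_component[OF assms(3)] by simp
  moreover have "card (component F u) = 3"
    using Lambda_factor_card_component[OF assms(1,2)] .
  ultimately have "card (component F u - {u, w}) = 1"
    using assms(4) by (simp add: card_Diff_subset)
  then obtain t where "component F u - {u, w} = {t}"
    by (rule card_1_singletonE)
  with \<open>{u, w} \<subseteq> component F u\<close> show ?thesis
    by blast
qed

lemma Lambda_factor_3_dvd_card:
  assumes LF: "Lambda_factor G F" and "finite X" "X \<subseteq> verts G"
    and "\<And>x y. {x, y} \<in> F \<Longrightarrow> x \<in> X \<Longrightarrow> y \<in> X \<union> Z"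
    and "\<And>z. z \<in> Z \<Longrightarrow> component F z \<inter> X = {}"
  shows "3 dvd card X"
proof (rule dvd_card_if_components_card[where F = F])
  show "finite X" by fact
  show "component F v \<subseteq> X" if "v \<in> X" for v
    using component_subset[OF assms(4,5) that] .
  show "card (component F v) = 3" if "v \<in> X" for v
    using Lambda_factor_card_component[OF LF] assms(3) that by blast
qed

lemma verts_bridge_join [simp]:
  "verts (bridge_join A a1 a2 B b1 b2 z1 z2) = verts A \<union> verts B \<union> {z1, z2}"
  by (simp add: bridge_join_def verts_def)

lemma edges_bridge_join [simp]:
  "edges (bridge_join A a1 a2 B b1 b2 z1 z2) = (edges A - {{a1, a2}}) \<union> (edges B - {{b1, b2}}) \<union>
      {{a1, z1}, {z1, b1}, {a2, z2}, {z2, b2}, {z1, z2}}"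
  by (simp add: bridge_join_def edges_def)

lemma bridge_join_commute:
  "bridge_join A a1 a2 B b1 b2 z1 z2 = bridge_join B b1 b2 A a1 a2 z1 z2"
  unfolding bridge_join_def by (auto simp: insert_commute)

lemma card_verts_bridge_join:
  assumes "finite (verts A)" "finite (verts B)" "verts A \<inter> verts B = {}"
    and "z1 \<notin> verts A \<union> verts B" "z2 \<notin> verts A \<union> verts B" "z1 \<noteq> z2"
  shows "card (verts (bridge_join A a1 a2 B b1 b2 z1 z2)) = card (verts A) + card (verts B) + 2"
  using assms by (simp add: card_Un_disjoint)

lemma graph_edge_verts:
  assumes "is_graph G" "{x, y} \<in> edges G"
  shows "x \<in> verts G" "y \<in> verts G"
  using assms unfolding is_graph_def by (metis doubleton_eq_iff)+

lemma bridge_join_edge_leaving: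
  assumes "is_graph A" "is_graph B" "verts A \<inter> verts B = {}"
    and "z1 \<notin> verts A" "z2 \<notin> verts A"
    and "{x, y} \<in> edges (bridge_join A a1 a2 B b1 b2 z1 z2)" "x \<in> verts A"
  shows "y \<in> verts A \<union> {z1, z2}"
proof -
  consider "{x, y} \<in> edges A" | "{x, y} \<in> edges B" | "z1 \<in> {x, y} \<or> z2 \<in> {x, y}"
    using assms(6) by auto
  then show ?thesis
  proof cases
    case 1
    then show ?thesis using graph_edge_verts[OF assms(1)] by blast
  next
    case 2
    then show ?thesis using graph_edge_verts[OF assms(2)] assms(3,7) by blast
  next
    case 3
    then show ?thesis using assms(4,5,7) by auto
  qed
qed

lemma bridge_join_Lambda_factor_3_dvd_card:
  assumes "is_graph A" "is_graph B" "verts A \<inter> verts B = {}"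
    and "z1 \<notin> verts A" "z2 \<notin> verts A"
    and LF: "Lambda_factor (bridge_join A a1 a2 B b1 b2 z1 z2) F" and "{z1, z2} \<in> F"
    and z1: "component F z1 = {z1, z2, t}" and "t \<notin> verts A"
  shows "3 dvd card (verts A)"
proof (rule Lambda_factor_3_dvd_card[OF LF, where Z = "{z1, z2}"])
  show "finite (verts A)"
    using assms(1) by (simp add: is_graph_def)
  have "component F z2 = component F z1"
    using component_eq edge_in_component \<open>{z1, z2} \<in> F\<close> by metis
  then show "\<And>z. z \<in> {z1, z2} \<Longrightarrow> component F z \<inter> verts A = {}"
    using z1 assms(4,5,9) by auto
  show "y \<in> verts A \<union> {z1, z2}" if "{x, y} \<in> F" "x \<in> verts A" for x y
  proof (rule bridge_join_edge_leaving[OF assms(1-5) _ that(2)])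
    show "{x, y} \<in> edges (bridge_join A a1 a2 B b1 b2 z1 z2)"
      using LF that(1) unfolding Lambda_factor_def by (simp only: subset_iff)
  qed
qed auto

lemma bridge_join_no_Lambda_factor_through_middle:
  assumes "is_graph A" "is_graph B" "verts A \<inter> verts B = {}"
    and "z1 \<notin> verts A \<union> verts B" "z2 \<notin> verts A \<union> verts B" "z1 \<noteq> z2"
    and "\<not> 3 dvd card (verts A)" "\<not> 3 dvd card (verts B)"
    and LF: "Lambda_factor (bridge_join A a1 a2 B b1 b2 z1 z2) F" and z: "{z1, z2} \<in> F"
  shows False
proof -
  obtain t where t: "component F z1 = {z1, z2, t}"
    using Lambda_factor_component_of_edge[OF LF _ z] assms(6) by auto
  show False
  proof (cases "t \<in> verts A")
    case True
    then have "t \<notin> verts B"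
      using assms(3) by blast
    moreover have "Lambda_factor (bridge_join B b1 b2 A a1 a2 z1 z2) F"
      using LF by (simp only: bridge_join_commute)
    ultimately have "3 dvd card (verts B)"
      using bridge_join_Lambda_factor_3_dvd_card[OF assms(2,1) _ _ _ _ z t] assms(3-5)
      by (simp add: Int_commute)
    then show False using assms(8) by blast
  next
    case False
    then have "3 dvd card (verts A)"
      using bridge_join_Lambda_factor_3_dvd_card[OF assms(1-3) _ _ LF z t] assms(4,5) by blast
    then show False using assms(7) by blast
  qed
qed

theorem mainTheorem9:
  fixes A B :: "'a graph" and a1 a2 b1 b2 z1 z2 :: 'a
  assumes "cubic A" and "cubic B"
    and "verts A \<inter> verts B = {}"
    and "card (verts A) mod 6 = 2" and "card (verts B) mod 6 = 2"
    and "{a1, a2} \<in> edges A" and "{b1, b2} \<in> edges B"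
    and "z1 \<notin> verts A \<union> verts B" and "z2 \<notin> verts A \<union> verts B" and "z1 \<noteq> z2"
  shows "card (verts (bridge_join A a1 a2 B b1 b2 z1 z2)) mod 6 = 0
    \<and> \<not> (\<exists>F. Lambda_factor (bridge_join A a1 a2 B b1 b2 z1 z2) F \<and> {z1, z2} \<in> F)"
proof
  have graphs: "is_graph A" "is_graph B"
    using assms(1,2) by (simp_all add: cubic_def)
  then have "card (verts (bridge_join A a1 a2 B b1 b2 z1 z2)) = card (verts A) + card (verts B) + 2"
    using assms(3,8-10) by (intro card_verts_bridge_join) (simp_all add: is_graph_def)
  then show "card (verts (bridge_join A a1 a2 B b1 b2 z1 z2)) mod 6 = 0"
    using assms(4,5) by presburger
  have not_dvd: "\<not> 3 dvd card (verts A)" "\<not> 3 dvd card (verts B)"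
    using assms(4,5) by presburger+
  show "\<not> (\<exists>F. Lambda_factor (bridge_join A a1 a2 B b1 b2 z1 z2) F \<and> {z1, z2} \<in> F)"
    using bridge_join_no_Lambda_factor_through_middle[OF graphs assms(3,8-10) not_dvd] by metis
qed

end
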